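(* Let $\Gamma$ be a finite connected $(G,s)$-geodesic-transitive graph with $s\ge2$ and $G\le\mathrm{Aut}(\Gamma)$. Let $1\ne N\trianglelefteq G$ be intransitive on $V(\Gamma)$. Suppose that $\Gamma$ is not isomorphic to the complete multipartite graph $K_{m[b]}$ for any $m\ge3$ and $b\ge2$. Then either (i) $N$ has exactly $2$ orbits on $V(\Gamma)$ and $\Gamma$ is bipartite; or (ii) $N$ has at least $3$ orbits on $V(\Gamma)$, $N$ is semiregular on $V(\Gamma)$, $\Gamma$ is a cover of $\Gamma_N$, and $\Gamma_N$ is $(G/N,s')$-geodesic-transitive where $s'=\min\{s,\mathrm{diam}(\Gamma_N)\}$.
   Context: $K_{m[b]}$ is the complete multipartite graph with $m$ parts each of size $b$. An $s$-geodesic is a path $(v_0,\dots,v_s)$ with $d(v_0,v_s)=s$; $\Gamma$ is $(G,s)$-geodesic-transitive if it has an $s$-geodesic and $G$ is transitive on the set of $i$-geodesics for each $i\le s$. For $N\trianglelefteq G$, $\Gamma_N$ is the graph whose vertices are the $N$-orbits, two distinct orbits adjacent iff some edge of $\Gamma$ joins them; $G/N$ acts on $\Gamma_N$. $\Gamma$ is a cover of $\Gamma_N$ if for each edge $\{B,C\}$ of $\Gamma_N$ and $v\in B$, $v$ has exactly one neighbour in $C$. Semiregular means all point stabilisers in $N$ are trivial. *)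

theory Defs
  imports Main
begin

definition simple_graph :: "'a set \<Rightarrow> ('a \<Rightarrow> 'a \<Rightarrow> bool) \<Rightarrow> bool" where
  "simple_graph V E \<longleftrightarrow> finite V \<and> (\<forall>u v. E u v \<longrightarrow> u \<in> V \<and> v \<in> V)
     \<and> (\<forall>u v. E u v \<longrightarrow> E v u) \<and> (\<forall>u. \<not> E u u)"

definition walk :: "'a set \<Rightarrow> ('a \<Rightarrow> 'a \<Rightarrow> bool) \<Rightarrow> 'a list \<Rightarrow> bool" where
  "walk V E xs \<longleftrightarrow> xs \<noteq> [] \<and> set xs \<subseteq> V \<and> (\<forall>i. Suc i < length xs \<longrightarrow> E (xs ! i) (xs ! Suc i))"

definition connected_graph :: "'a set \<Rightarrow> ('a \<Rightarrow> 'a \<Rightarrow> bool) \<Rightarrow> bool" where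
  "connected_graph V E \<longleftrightarrow> (\<forall>u\<in>V. \<forall>v\<in>V. \<exists>xs. walk V E xs \<and> hd xs = u \<and> last xs = v)"

definition gdist :: "'a set \<Rightarrow> ('a \<Rightarrow> 'a \<Rightarrow> bool) \<Rightarrow> 'a \<Rightarrow> 'a \<Rightarrow> nat" where
  "gdist V E u v = (LEAST n. \<exists>xs. walk V E xs \<and> hd xs = u \<and> last xs = v \<and> length xs = Suc n)"

definition diam :: "'a set \<Rightarrow> ('a \<Rightarrow> 'a \<Rightarrow> bool) \<Rightarrow> nat" where
  "diam V E = Max {gdist V E u v | u v. u \<in> V \<and> v \<in> V}"

definition geodesic :: "'a set \<Rightarrow> ('a \<Rightarrow> 'a \<Rightarrow> bool) \<Rightarrow> nat \<Rightarrow> 'a list \<Rightarrow> bool" where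
  "geodesic V E s xs \<longleftrightarrow> walk V E xs \<and> length xs = Suc s \<and> gdist V E (hd xs) (last xs) = s"

definition geodesic_transitive ::
  "'a set \<Rightarrow> ('a \<Rightarrow> 'a \<Rightarrow> bool) \<Rightarrow> ('a \<Rightarrow> 'a) set \<Rightarrow> nat \<Rightarrow> bool" where
  "geodesic_transitive V E G s \<longleftrightarrow> (\<exists>xs. geodesic V E s xs) \<and>
     (\<forall>i\<le>s. \<forall>xs ys. geodesic V E i xs \<and> geodesic V E i ys \<longrightarrow> (\<exists>g\<in>G. map g xs = ys))"

definition perm_on :: "'a set \<Rightarrow> ('a \<Rightarrow> 'a) \<Rightarrow> bool" where
  "perm_on V g \<longleftrightarrow> bij_betw g V V \<and> (\<forall>x. x \<notin> V \<longrightarrow> g x = x)"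

definition perm_group :: "'a set \<Rightarrow> ('a \<Rightarrow> 'a) set \<Rightarrow> bool" where
  "perm_group V G \<longleftrightarrow> id \<in> G \<and> (\<forall>g\<in>G. perm_on V g)
     \<and> (\<forall>g\<in>G. \<forall>h\<in>G. g \<circ> h \<in> G) \<and> (\<forall>g\<in>G. \<exists>h\<in>G. h \<circ> g = id)"

definition aut_group :: "'a set \<Rightarrow> ('a \<Rightarrow> 'a \<Rightarrow> bool) \<Rightarrow> ('a \<Rightarrow> 'a) set \<Rightarrow> bool" where
  "aut_group V E G \<longleftrightarrow> perm_group V G \<and> (\<forall>g\<in>G. \<forall>u\<in>V. \<forall>v\<in>V. E u v \<longleftrightarrow> E (g u) (g v))"

definition normal_subgroup :: "'a set \<Rightarrow> ('a \<Rightarrow> 'a) set \<Rightarrow> ('a \<Rightarrow> 'a) set \<Rightarrow> bool" where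
  "normal_subgroup V N G \<longleftrightarrow> perm_group V N \<and> N \<subseteq> G \<and>
     (\<forall>g\<in>G. \<forall>n\<in>N. \<exists>n'\<in>N. g \<circ> n = n' \<circ> g)"

definition orbit :: "('a \<Rightarrow> 'a) set \<Rightarrow> 'a \<Rightarrow> 'a set" where
  "orbit N x = (\<lambda>n. n x) ` N"

definition orbits :: "'a set \<Rightarrow> ('a \<Rightarrow> 'a) set \<Rightarrow> 'a set set" where
  "orbits V N = orbit N ` V"

definition transitive_on :: "'a set \<Rightarrow> ('a \<Rightarrow> 'a) set \<Rightarrow> bool" where
  "transitive_on V N \<longleftrightarrow> (\<forall>x\<in>V. \<forall>y\<in>V. \<exists>n\<in>N. n x = y)"

definition semiregular :: "'a set \<Rightarrow> ('a \<Rightarrow> 'a) set \<Rightarrow> bool" where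
  "semiregular V N \<longleftrightarrow> (\<forall>n\<in>N. \<forall>x\<in>V. n x = x \<longrightarrow> n = id)"

definition bipartite :: "'a set \<Rightarrow> ('a \<Rightarrow> 'a \<Rightarrow> bool) \<Rightarrow> bool" where
  "bipartite V E \<longleftrightarrow> (\<exists>A. A \<subseteq> V \<and> (\<forall>u v. E u v \<longrightarrow> (u \<in> A \<longleftrightarrow> v \<notin> A)))"

definition quot_edge :: "('a \<Rightarrow> 'a \<Rightarrow> bool) \<Rightarrow> 'a set \<Rightarrow> 'a set \<Rightarrow> bool" where
  "quot_edge E B C \<longleftrightarrow> B \<noteq> C \<and> (\<exists>u\<in>B. \<exists>v\<in>C. E u v)"

(* action of G (hence of G/N) on the N-orbits *)
definition quot_action :: "'a set \<Rightarrow> ('a \<Rightarrow> 'a) set \<Rightarrow> ('a \<Rightarrow> 'a) set \<Rightarrow> ('a set \<Rightarrow> 'a set) set" where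
  "quot_action V N G = (\<lambda>g. \<lambda>B. if B \<in> orbits V N then g ` B else B) ` G"

definition is_cover :: "'a set \<Rightarrow> ('a \<Rightarrow> 'a \<Rightarrow> bool) \<Rightarrow> ('a \<Rightarrow> 'a) set \<Rightarrow> bool" where
  "is_cover V E N \<longleftrightarrow> (\<forall>B\<in>orbits V N. \<forall>C\<in>orbits V N. quot_edge E B C \<longrightarrow>
      (\<forall>v\<in>B. card {w\<in>C. E v w} = 1))"

definition graph_iso :: "'a set \<Rightarrow> ('a \<Rightarrow> 'a \<Rightarrow> bool) \<Rightarrow> 'b set \<Rightarrow> ('b \<Rightarrow> 'b \<Rightarrow> bool) \<Rightarrow> bool" where
  "graph_iso V E W F \<longleftrightarrow> (\<exists>f. bij_betw f V W \<and> (\<forall>u\<in>V. \<forall>v\<in>V. E u v \<longleftrightarrow> F (f u) (f v)))"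

(* complete multipartite graph K_{m[b]}: vertex (i,j) = j-th vertex of part i *)
definition Kmb_V :: "nat \<Rightarrow> nat \<Rightarrow> (nat \<times> nat) set" where
  "Kmb_V m b = {0..<m} \<times> {0..<b}"

definition Kmb_E :: "nat \<times> nat \<Rightarrow> nat \<times> nat \<Rightarrow> bool" where
  "Kmb_E x y \<longleftrightarrow> fst x \<noteq> fst y"

end

theory Submission
  imports Defs
begin

text \<open>Geodesic-transitivity makes \<open>G\<close> arc-transitive, so every orbit of an intransitive normal
  subgroup \<open>N\<close> of a connected graph is an independent set; with two orbits this is bipartiteness.
  With at least three orbits, either some vertex has two neighbours in one orbit, or every vertex
  has at most one neighbour in each orbit. In the first case the 2-geodesic through those two
  neighbours shows, by 2-geodesic-transitivity, that the ends of every 2-geodesic lie in a common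
  orbit; this forces diameter two and adjacency exactly between distinct orbits, so the graph is
  complete multipartite with the orbits as parts. In the second case the graph covers its
  quotient, a fixed point of an element of \<open>N\<close> propagates along edges, so \<open>N\<close> is semiregular,
  and geodesics of the quotient lift to geodesics, so geodesic-transitivity descends to the
  quotient.\<close>

section \<open>Walks and geodesics\<close>

lemma walk_Nil [simp]: "\<not> walk V E []"
  by (simp add: walk_def)

lemma walk_singleton [simp]: "walk V E [x] \<longleftrightarrow> x \<in> V"
  by (simp add: walk_def)

lemma walk_Cons_Cons [simp]:
  "walk V E (x # y # zs) \<longleftrightarrow> x \<in> V \<and> E x y \<and> walk V E (y # zs)"
  unfolding walk_def by (auto simp: less_Suc_eq_0_disj)

lemma walk_append:
  assumes "walk V E xs" "walk V E ys" "E (last xs) (hd ys)"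
  shows "walk V E (xs @ ys)"
  using assms by (induction xs rule: induct_list012) (cases ys; auto)+

lemma walk_take: "walk V E xs \<Longrightarrow> 0 < k \<Longrightarrow> walk V E (take k xs)"
  unfolding walk_def by (auto dest: in_set_takeD)

lemma walk_drop: "walk V E xs \<Longrightarrow> k < length xs \<Longrightarrow> walk V E (drop k xs)"
  unfolding walk_def by (auto dest: in_set_dropD)

lemma walk_last_in_closed_set:
  assumes "walk V E xs" "hd xs \<in> S" "\<And>y z. y \<in> S \<Longrightarrow> E y z \<Longrightarrow> z \<in> S"
  shows "last xs \<in> S"
  using assms by (induction xs rule: induct_list012) auto

lemma connected_graph_subset_closed_set:
  assumes "connected_graph V E" "x \<in> V" "x \<in> S" "\<And>y z. y \<in> S \<Longrightarrow> E y z \<Longrightarrow> z \<in> S"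
  shows "V \<subseteq> S"
proof
  fix v assume "v \<in> V"
  then obtain xs where "walk V E xs" "hd xs = x" "last xs = v"
    using assms(1,2) unfolding connected_graph_def by blast
  then show "v \<in> S" using walk_last_in_closed_set assms(3,4) by metis
qed

lemma gdist_le_length:
  assumes "walk V E xs"
  shows "Suc (gdist V E (hd xs) (last xs)) \<le> length xs"
proof -
  have "length xs = Suc (length xs - 1)" using assms by (cases xs) auto
  then have "gdist V E (hd xs) (last xs) \<le> length xs - 1"
    unfolding gdist_def using assms by (intro Least_le) blast
  then show ?thesis using assms by (cases xs) auto
qed

lemma shortest_walk_exists:
  assumes "walk V E xs"
  obtains ys where "walk V E ys" "hd ys = hd xs" "last ys = last xs"
    "length ys = Suc (gdist V E (hd xs) (last xs))"
proof -
  have "\<exists>n ys. walk V E ys \<and> hd ys = hd xs \<and> last ys = last xs \<and> length ys = Suc n"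
    using assms by (intro exI[of _ "length xs - 1"] exI[of _ xs]) (auto simp: walk_def)
  from LeastI_ex[OF this] show ?thesis using that unfolding gdist_def by blast
qed

lemma geodesic_iff_shortest_walk:
  "geodesic V E i xs \<longleftrightarrow> walk V E xs \<and> length xs = Suc i \<and>
     (\<forall>ys. walk V E ys \<and> hd ys = hd xs \<and> last ys = last xs \<longrightarrow> length xs \<le> length ys)"
    (is "_ \<longleftrightarrow> ?walk \<and> ?len \<and> ?shortest")
proof
  assume "geodesic V E i xs"
  then show "?walk \<and> ?len \<and> ?shortest"
    unfolding geodesic_def by (metis gdist_le_length)
next
  assume *: "?walk \<and> ?len \<and> ?shortest"
  then obtain ys where "walk V E ys" "hd ys = hd xs" "last ys = last xs"
    "length ys = Suc (gdist V E (hd xs) (last xs))"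
    using shortest_walk_exists by blast
  with * gdist_le_length[of V E xs] show "geodesic V E i xs"
    unfolding geodesic_def by fastforce
qed

lemma geodesic_take:
  assumes geo: "geodesic V E d xs" and "k \<le> d"
  shows "geodesic V E k (take (Suc k) xs)"
proof (cases "k = d")
  case True
  with geo show ?thesis by (simp add: geodesic_def)
next
  case False
  with \<open>k \<le> d\<close> have "k < d" by simp
  have w: "walk V E xs" and l: "length xs = Suc d"
    using geo by (auto simp: geodesic_def)
  let ?p = "take (Suc k) xs" and ?r = "drop (Suc k) xs"
  show ?thesis unfolding geodesic_iff_shortest_walk
  proof (intro conjI allI impI)
    show "walk V E ?p" using walk_take[OF w] by simp
    show "length ?p = Suc k" using l \<open>k < d\<close> by simp
    fix ys assume ys: "walk V E ys \<and> hd ys = hd ?p \<and> last ys = last ?p"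
    have "last ?p = xs ! k" "hd ?r = xs ! Suc k" "?r \<noteq> []"
      using l \<open>k < d\<close> by (auto simp: take_Suc_conv_app_nth hd_drop_conv_nth)
    moreover have "E (xs ! k) (xs ! Suc k)"
      using w l \<open>k < d\<close> unfolding walk_def by simp
    ultimately have "walk V E (ys @ ?r)"
      using ys walk_drop[OF w, of "Suc k"] l \<open>k < d\<close> by (intro walk_append) auto
    moreover have "hd (ys @ ?r) = hd xs" "last (ys @ ?r) = last xs"
      using ys \<open>?r \<noteq> []\<close> by (auto simp: walk_def)
    ultimately have "length xs \<le> length (ys @ ?r)"
      using geo unfolding geodesic_iff_shortest_walk by blast
    then show "length ?p \<le> length ys" using l \<open>k < d\<close> by simp
  qed
qed

lemma geodesic_singleton: "x \<in> V \<Longrightarrow> geodesic V E 0 [x]"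
  unfolding geodesic_iff_shortest_walk by (auto simp: walk_def Suc_le_eq)

lemma geodesic_edge_iff: "geodesic V E 1 [x, y] \<longleftrightarrow> walk V E [x, y] \<and> x \<noteq> y"
proof -
  let ?shortest = "\<forall>ys. walk V E ys \<and> hd ys = x \<and> last ys = y \<longrightarrow> length [x, y] \<le> length ys"
  have "?shortest \<longleftrightarrow> x \<noteq> y" if "walk V E [x, y]"
  proof
    assume ?shortest
    from this[rule_format, of "[x]"] that show "x \<noteq> y" by auto
  next
    assume "x \<noteq> y"
    show ?shortest
    proof (intro allI impI)
      fix ys assume "walk V E ys \<and> hd ys = x \<and> last ys = y"
      with \<open>x \<noteq> y\<close> show "length [x, y] \<le> length ys" by (cases ys; cases "tl ys") auto
    qed
  qed
  moreover have "length [x, y] = Suc 1" "hd [x, y] = x" "last [x, y] = y" by simp_all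
  ultimately show ?thesis unfolding geodesic_iff_shortest_walk by metis
qed

lemma geodesic_two_iff:
  "geodesic V E 2 [x, a, y] \<longleftrightarrow> walk V E [x, a, y] \<and> x \<noteq> y \<and> \<not> E x y"
proof -
  let ?shortest = "\<forall>ys. walk V E ys \<and> hd ys = x \<and> last ys = y \<longrightarrow> length [x, a, y] \<le> length ys"
  have "?shortest \<longleftrightarrow> x \<noteq> y \<and> \<not> E x y" if "walk V E [x, a, y]"
  proof
    assume ?shortest
    from this[rule_format, of "[x]"] this[rule_format, of "[x, y]"] that
    show "x \<noteq> y \<and> \<not> E x y" by auto
  next
    assume "x \<noteq> y \<and> \<not> E x y"
    show ?shortest
    proof (intro allI impI)
      fix ys assume "walk V E ys \<and> hd ys = x \<and> last ys = y"
      with \<open>x \<noteq> y \<and> \<not> E x y\<close> show "length [x, a, y] \<le> length ys"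
        by (cases ys; cases "tl ys"; cases "tl (tl ys)") auto
    qed
  qed
  moreover have "length [x, a, y] = Suc 2" "hd [x, a, y] = x" "last [x, a, y] = y" by simp_all
  ultimately show ?thesis unfolding geodesic_iff_shortest_walk by metis
qed

lemma geodesic_diam_exists:
  assumes "finite V" "V \<noteq> {}" "connected_graph V E"
  shows "\<exists>xs. geodesic V E (diam V E) xs"
proof -
  have D: "{gdist V E u v | u v. u \<in> V \<and> v \<in> V} = (\<lambda>(u, v). gdist V E u v) ` (V \<times> V)"
    by auto
  have "diam V E \<in> (\<lambda>(u, v). gdist V E u v) ` (V \<times> V)"
    unfolding diam_def D using assms(1,2) by (intro Max_in) simp_all
  then obtain u v where uv: "u \<in> V" "v \<in> V" "gdist V E u v = diam V E" by force
  then obtain xs where xs: "walk V E xs" "hd xs = u" "last xs = v"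
    using assms(3) unfolding connected_graph_def by blast
  obtain ys where "walk V E ys" "hd ys = hd xs" "last ys = last xs"
    "length ys = Suc (gdist V E (hd xs) (last xs))"
    by (rule shortest_walk_exists[OF xs(1)])
  then show ?thesis
    using xs uv(3) unfolding geodesic_def by auto
qed

lemma graph_iso_Kmb:
  fixes cl :: "'a \<Rightarrow> 'a set"
  assumes "finite V"
    and cl_self: "\<And>x. x \<in> V \<Longrightarrow> x \<in> cl x"
    and cl_subset: "\<And>x. x \<in> V \<Longrightarrow> cl x \<subseteq> V"
    and cl_eq: "\<And>x y. x \<in> V \<Longrightarrow> y \<in> cl x \<Longrightarrow> cl y = cl x"
    and card_cl: "\<And>x. x \<in> V \<Longrightarrow> card (cl x) = b"
    and edge_iff: "\<And>x y. x \<in> V \<Longrightarrow> y \<in> V \<Longrightarrow> E x y \<longleftrightarrow> cl x \<noteq> cl y"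
  shows "graph_iso V E (Kmb_V (card (cl ` V)) b) Kmb_E"
proof -
  obtain e where e: "bij_betw e (cl ` V) {0..<card (cl ` V)}"
    using ex_bij_betw_finite_nat assms(1) by blast
  have "\<forall>Q\<in>cl ` V. \<exists>h. bij_betw h Q {0..<b}"
  proof
    fix Q assume "Q \<in> cl ` V"
    then obtain x where "x \<in> V" "Q = cl x" by blast
    then have "finite Q" "card Q = b"
      using finite_subset[OF cl_subset assms(1)] card_cl by auto
    then show "\<exists>h. bij_betw h Q {0..<b}" using ex_bij_betw_finite_nat by metis
  qed
  then obtain h where h: "\<And>Q. Q \<in> cl ` V \<Longrightarrow> bij_betw (h Q) Q {0..<b}"
    by metis
  define f where "f x = (e (cl x), h (cl x) x)" for x
  have e_eq: "e (cl x) = e (cl y) \<longleftrightarrow> cl x = cl y" if "x \<in> V" "y \<in> V" for x y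
    using bij_betw_imp_inj_on[OF e] that by (auto dest: inj_onD)
  have "inj_on f V"
  proof (rule inj_onI)
    fix x y assume xy: "x \<in> V" "y \<in> V" "f x = f y"
    then have "cl y = cl x" "h (cl x) x = h (cl x) y"
      using e_eq unfolding f_def by auto
    moreover have "x \<in> cl x" "y \<in> cl x" using xy cl_self \<open>cl y = cl x\<close> by auto
    ultimately show "x = y"
      using bij_betw_imp_inj_on[OF h] xy(1) by (auto dest: inj_onD)
  qed
  moreover have "f ` V = Kmb_V (card (cl ` V)) b"
  proof
    show "f ` V \<subseteq> Kmb_V (card (cl ` V)) b"
      using bij_betwE[OF e] bij_betwE[OF h] cl_self unfolding f_def Kmb_V_def by auto
  next
    show "Kmb_V (card (cl ` V)) b \<subseteq> f ` V"
    proof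
      fix p assume "p \<in> Kmb_V (card (cl ` V)) b"
      then obtain i j where p: "p = (i, j)" "i < card (cl ` V)" "j < b"
        unfolding Kmb_V_def by auto
      then have "i \<in> e ` cl ` V" using bij_betw_imp_surj_on[OF e] by simp
      then obtain z where z: "z \<in> V" "e (cl z) = i" by blast
      then have "j \<in> h (cl z) ` cl z" using bij_betw_imp_surj_on[OF h] p(3) by simp
      then obtain x where x: "x \<in> cl z" "h (cl z) x = j" by blast
      have "x \<in> V" using x(1) cl_subset z(1) by blast
      moreover have "cl x = cl z" using cl_eq z(1) x(1) by blast
      ultimately have "f x = p" using p z x unfolding f_def by simp
      with \<open>x \<in> V\<close> show "p \<in> f ` V" by blast
    qed
  qed
  moreover have "E x y \<longleftrightarrow> Kmb_E (f x) (f y)" if "x \<in> V" "y \<in> V" for x y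
    using edge_iff e_eq that unfolding f_def Kmb_E_def by simp
  ultimately show ?thesis unfolding graph_iso_def bij_betw_def by blast
qed

section \<open>Orbits of a normal subgroup\<close>

locale normal_perm_subgroup =
  fixes V :: "'a set" and G N :: "('a \<Rightarrow> 'a) set"
  assumes perm_group: "perm_group V G" and normal: "normal_subgroup V N G"
begin

lemma G_bij_betw: "g \<in> G \<Longrightarrow> bij_betw g V V"
  using perm_group by (simp add: perm_group_def perm_on_def)

lemma G_fixes_outside: "g \<in> G \<Longrightarrow> x \<notin> V \<Longrightarrow> g x = x"
  using perm_group by (simp add: perm_group_def perm_on_def)

lemma G_closed: "g \<in> G \<Longrightarrow> x \<in> V \<Longrightarrow> g x \<in> V"
  using G_bij_betw bij_betwE by blast

lemma G_left_inverse: "g \<in> G \<Longrightarrow> \<exists>h\<in>G. h \<circ> g = id"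
  using perm_group by (simp add: perm_group_def)

lemma N_subset_G: "N \<subseteq> G"
  using normal by (simp add: normal_subgroup_def)

lemma id_in_N: "id \<in> N"
  using normal by (simp add: normal_subgroup_def perm_group_def)

lemma N_comp_closed: "m \<in> N \<Longrightarrow> n \<in> N \<Longrightarrow> m \<circ> n \<in> N"
  using normal by (simp add: normal_subgroup_def perm_group_def)

lemma N_left_inverse: "n \<in> N \<Longrightarrow> \<exists>m\<in>N. m \<circ> n = id"
  using normal by (simp add: normal_subgroup_def perm_group_def)

lemma N_conj: "g \<in> G \<Longrightarrow> n \<in> N \<Longrightarrow> \<exists>n'\<in>N. g \<circ> n = n' \<circ> g"
  using normal by (simp add: normal_subgroup_def)

lemma orbitI: "n \<in> N \<Longrightarrow> n x \<in> orbit N x"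
  unfolding orbit_def by blast

lemma orbitE: "y \<in> orbit N x \<Longrightarrow> (\<And>n. n \<in> N \<Longrightarrow> y = n x \<Longrightarrow> P) \<Longrightarrow> P"
  unfolding orbit_def by blast

lemma orbit_self: "x \<in> orbit N x"
  using orbitI[OF id_in_N] by simp

lemma orbit_subset: "x \<in> V \<Longrightarrow> orbit N x \<subseteq> V"
  using G_closed N_subset_G by (auto elim!: orbitE)

lemma orbit_in_orbits: "x \<in> V \<Longrightarrow> orbit N x \<in> orbits V N"
  unfolding orbits_def by blast

lemma orbits_subset: "B \<in> orbits V N \<Longrightarrow> B \<subseteq> V"
  unfolding orbits_def using orbit_subset by blast

lemma orbit_subset_orbit: "y \<in> orbit N x \<Longrightarrow> orbit N y \<subseteq> orbit N x"
proof
  fix z assume "y \<in> orbit N x" "z \<in> orbit N y"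
  then obtain m n where "m \<in> N" "n \<in> N" "y = n x" "z = m y" by (auto elim!: orbitE)
  then show "z \<in> orbit N x" using orbitI[OF N_comp_closed, of m n x] by simp
qed

lemma orbit_sym: "y \<in> orbit N x \<Longrightarrow> x \<in> orbit N y"
proof (erule orbitE)
  fix n assume "n \<in> N" "y = n x"
  moreover obtain m where "m \<in> N" "m \<circ> n = id" using N_left_inverse \<open>n \<in> N\<close> by blast
  ultimately show "x \<in> orbit N y" using orbitI[of m y] by (simp add: fun_eq_iff)
qed

lemma orbit_eq: "y \<in> orbit N x \<Longrightarrow> orbit N y = orbit N x"
  using orbit_subset_orbit orbit_sym by blast

lemma orbit_eq_iff: "orbit N y = orbit N x \<longleftrightarrow> y \<in> orbit N x"
  using orbit_eq orbit_self by blast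

lemma orbit_eq_orbits:
  assumes "B \<in> orbits V N" "x \<in> B"
  shows "orbit N x = B"
proof -
  from assms(1) obtain a where "B = orbit N a" unfolding orbits_def by blast
  with assms(2) show ?thesis using orbit_eq by simp
qed

lemma image_orbit_subset: "g \<in> G \<Longrightarrow> g ` orbit N x \<subseteq> orbit N (g x)"
  by (auto elim!: orbitE dest!: N_conj simp: fun_eq_iff intro: orbitI)

lemma image_orbit:
  assumes "g \<in> G" "x \<in> V"
  shows "g ` orbit N x = orbit N (g x)"
proof
  show "g ` orbit N x \<subseteq> orbit N (g x)" using image_orbit_subset[OF assms(1)] .
  obtain h where h: "h \<in> G" "h \<circ> g = id" using G_left_inverse assms(1) by blast
  show "orbit N (g x) \<subseteq> g ` orbit N x"
  proof
    fix y assume y: "y \<in> orbit N (g x)"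
    then have "y \<in> V" using orbit_subset G_closed assms by blast
    then obtain z where "z \<in> V" "y = g z"
      using bij_betw_imp_surj_on[OF G_bij_betw[OF assms(1)]] by blast
    moreover have "h y \<in> orbit N x"
      using image_orbit_subset[OF h(1)] y h(2) by (force simp: fun_eq_iff)
    ultimately show "y \<in> g ` orbit N x" using h(2) by (force simp: fun_eq_iff)
  qed
qed

lemma mem_orbit_image_iff:
  assumes "g \<in> G" "x \<in> V" "y \<in> V"
  shows "g y \<in> orbit N (g x) \<longleftrightarrow> y \<in> orbit N x"
  using inj_on_image_mem_iff[OF bij_betw_imp_inj_on[OF G_bij_betw] _ orbit_subset] image_orbit assms
  by metis

lemma card_orbit_image:
  assumes "g \<in> G" "x \<in> V"
  shows "card (orbit N (g x)) = card (orbit N x)"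
  using card_image inj_on_subset[OF bij_betw_imp_inj_on[OF G_bij_betw] orbit_subset] image_orbit assms
  by metis

lemma card_orbits_ge_2:
  assumes "finite V" "\<not> transitive_on V N"
  shows "2 \<le> card (orbits V N)"
proof -
  obtain x y where "x \<in> V" "y \<in> V" "y \<notin> orbit N x"
    using assms(2) unfolding transitive_on_def orbit_def by blast
  then have "{orbit N x, orbit N y} \<subseteq> orbits V N" "orbit N x \<noteq> orbit N y"
    using orbit_in_orbits orbit_self by (blast, metis)
  moreover have "finite (orbits V N)" using assms(1) by (simp add: orbits_def)
  ultimately have "card {orbit N x, orbit N y} \<le> card (orbits V N)"
    by (intro card_mono)
  with \<open>orbit N x \<noteq> orbit N y\<close> show ?thesis by simp
qed

end

locale graph_normal_subgroup =
  fixes V :: "'a set" and E :: "'a \<Rightarrow> 'a \<Rightarrow> bool" and G N :: "('a \<Rightarrow> 'a) set"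
  assumes simple_graph: "simple_graph V E" and aut_group: "aut_group V E G"
    and normal: "normal_subgroup V N G"
begin

sublocale normal_perm_subgroup V G N
  using aut_group normal by unfold_locales (simp_all add: aut_group_def)

lemma finite_V: "finite V"
  using simple_graph by (simp add: simple_graph_def)

lemma finite_orbits: "finite (orbits V N)"
  using finite_V by (simp add: orbits_def)

lemma edge_in_V: "E u v \<Longrightarrow> u \<in> V \<and> v \<in> V"
  using simple_graph by (simp add: simple_graph_def)

lemma edge_sym: "E u v \<Longrightarrow> E v u"
  using simple_graph by (simp add: simple_graph_def)

lemma edge_irrefl: "\<not> E u u"
  using simple_graph by (simp add: simple_graph_def)

lemma G_edge:
  assumes "g \<in> G" "E u v"
  shows "E (g u) (g v)"
proof -
  have "\<forall>g\<in>G. \<forall>u\<in>V. \<forall>v\<in>V. E u v \<longleftrightarrow> E (g u) (g v)"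
    using aut_group unfolding aut_group_def by (rule conjunct2)
  with assms edge_in_V show ?thesis by blast
qed

lemma neighbour_in_adjacent_orbit:
  assumes "B \<in> orbits V N" "C \<in> orbits V N" "quot_edge E B C" "v \<in> B"
  shows "\<exists>w\<in>C. E v w"
proof -
  obtain x y where "x \<in> B" "y \<in> C" "E x y"
    using assms(3) unfolding quot_edge_def by blast
  have "v \<in> orbit N x" using orbit_eq_orbits[OF assms(1) \<open>x \<in> B\<close>] assms(4) by simp
  then obtain n where "n \<in> N" "v = n x" by (rule orbitE)
  then have "E v (n y)" "n y \<in> orbit N y"
    using G_edge N_subset_G \<open>E x y\<close> orbitI by auto
  moreover have "orbit N y = C" using orbit_eq_orbits[OF assms(2) \<open>y \<in> C\<close>] .
  ultimately show ?thesis by blast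
qed

lemma walk_lift:
  assumes "walk (orbits V N) (quot_edge E) Bs" "v \<in> hd Bs"
  shows "\<exists>xs. walk V E xs \<and> map (orbit N) xs = Bs \<and> hd xs = v"
  using assms
proof (induction Bs arbitrary: v rule: induct_list012)
  case (2 B)
  then have "v \<in> V" "orbit N v = B" using orbits_subset orbit_eq_orbits by auto
  then show ?case by (intro exI[of _ "[v]"]) simp
next
  case (3 B C Cs)
  then have B: "B \<in> orbits V N" "quot_edge E B C" and C: "walk (orbits V N) (quot_edge E) (C # Cs)"
    and "v \<in> B" by auto
  then have "C \<in> orbits V N" by (auto simp: walk_def)
  then obtain w where "w \<in> C" "E v w"
    using neighbour_in_adjacent_orbit B \<open>v \<in> B\<close> by blast
  then obtain xs where xs: "walk V E xs" "map (orbit N) xs = C # Cs" "hd xs = w"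
    using "3.IH"(2)[OF C, of w] \<open>w \<in> C\<close> by auto
  then obtain ys where "xs = w # ys" by (cases xs) auto
  then have "walk V E (v # xs)" using xs(1) \<open>E v w\<close> edge_in_V by simp
  moreover have "orbit N v = B" using orbit_eq_orbits B(1) \<open>v \<in> B\<close> by blast
  ultimately show ?case using xs(2) by (intro exI[of _ "v # xs"]) simp
qed simp

lemma is_cover_if_unique_neighbour_in_orbit:
  assumes unique: "\<And>v u w. E v u \<Longrightarrow> E v w \<Longrightarrow> w \<in> orbit N u \<Longrightarrow> u = w"
  shows "is_cover V E N"
  unfolding is_cover_def
proof (intro ballI impI)
  fix B C v assume "B \<in> orbits V N" "C \<in> orbits V N" "quot_edge E B C" "v \<in> B"
  then obtain w where w: "w \<in> C" "E v w"
    using neighbour_in_adjacent_orbit by blast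
  have "{w' \<in> C. E v w'} = {w}"
  proof (intro equalityI subsetI)
    fix w' assume "w' \<in> {w' \<in> C. E v w'}"
    then have "w' \<in> orbit N w" "E v w'"
      using orbit_eq_orbits[OF \<open>C \<in> orbits V N\<close> w(1)] by auto
    then show "w' \<in> {w}" using unique[OF w(2)] by force
  qed (use w in simp)
  then show "card {w' \<in> C. E v w'} = 1" by simp
qed

lemma semiregular_if_unique_neighbour_in_orbit:
  assumes "connected_graph V E"
    and unique: "\<And>v u w. E v u \<Longrightarrow> E v w \<Longrightarrow> w \<in> orbit N u \<Longrightarrow> u = w"
  shows "semiregular V N"
  unfolding semiregular_def
proof (intro ballI impI)
  fix n x assume n: "n \<in> N" and "x \<in> V" "n x = x"
  have "V \<subseteq> {y. n y = y}"
  proof (rule connected_graph_subset_closed_set[OF assms(1) \<open>x \<in> V\<close>])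
    fix y z assume "y \<in> {y. n y = y}" "E y z"
    then have "E y (n z)" using G_edge[of n y z] n N_subset_G by auto
    then show "z \<in> {y. n y = y}" using unique[OF \<open>E y z\<close> _ orbitI[OF n]] by simp
  qed (use \<open>n x = x\<close> in simp)
  moreover have "n y = y" if "y \<notin> V" for y
    using G_fixes_outside n N_subset_G that by blast
  ultimately show "n = id" by (auto simp: fun_eq_iff)
qed

lemma subset_two_orbits_if_neighbours_in_one_orbit:
  assumes "connected_graph V E" "E v u"
    and one: "\<And>x y z. E x y \<Longrightarrow> E x z \<Longrightarrow> z \<in> orbit N y"
  shows "V \<subseteq> orbit N v \<union> orbit N u"
proof (rule connected_graph_subset_closed_set[OF assms(1)])
  show "v \<in> V" "v \<in> orbit N v \<union> orbit N u" using assms(2) edge_in_V orbit_self by auto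
next
  have step: "z \<in> orbit N b" if "y \<in> orbit N a" "E a b" "E y z" for y z a b
  proof -
    from \<open>y \<in> orbit N a\<close> obtain n where "n \<in> N" "y = n a" by (rule orbitE)
    then have "E y (n b)" using G_edge N_subset_G \<open>E a b\<close> by auto
    then have "z \<in> orbit N (n b)" using one \<open>E y z\<close> by blast
    then show ?thesis using orbit_eq orbitI[OF \<open>n \<in> N\<close>] by blast
  qed
  fix y z assume "y \<in> orbit N v \<union> orbit N u" "E y z"
  then show "z \<in> orbit N v \<union> orbit N u"
    using step assms(2) edge_sym by blast
qed

end

section \<open>Normal quotients with independent orbits\<close>

locale independent_orbits = graph_normal_subgroup +
  assumes orbit_independent: "E u v \<Longrightarrow> v \<notin> orbit N u"
begin

lemma orbit_ne_if_edge: "E u v \<Longrightarrow> orbit N u \<noteq> orbit N v"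
  using orbit_independent orbit_eq_iff[of v u] by auto

lemma bipartite_if_two_orbits:
  assumes "card (orbits V N) = 2"
  shows "bipartite V E"
proof -
  obtain A B where AB: "orbits V N = {A, B}" "A \<noteq> B"
    using assms by (auto simp: card_2_iff)
  have A: "x \<in> A \<longleftrightarrow> orbit N x = A" if "x \<in> V" for x
    using orbit_eq_orbits[of A x] orbit_self[of x] AB(1) by blast
  have "u \<in> A \<longleftrightarrow> v \<notin> A" if "E u v" for u v
  proof -
    have "orbit N u \<in> {A, B}" "orbit N v \<in> {A, B}"
      using edge_in_V[OF that] orbit_in_orbits AB(1) by auto
    with orbit_ne_if_edge[OF that] AB(2) A edge_in_V[OF that] show ?thesis by auto
  qed
  moreover have "A \<subseteq> V" using orbits_subset AB(1) by blast
  ultimately show ?thesis unfolding bipartite_def by blast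
qed

lemma quot_edge_orbit: "E u v \<Longrightarrow> quot_edge E (orbit N u) (orbit N v)"
  unfolding quot_edge_def using orbit_ne_if_edge orbit_self by blast

lemma walk_project: "walk V E xs \<Longrightarrow> walk (orbits V N) (quot_edge E) (map (orbit N) xs)"
  by (induction xs rule: induct_list012) (auto simp: orbit_in_orbits quot_edge_orbit)

lemma connected_quotient:
  assumes "connected_graph V E"
  shows "connected_graph (orbits V N) (quot_edge E)"
  unfolding connected_graph_def
proof (intro ballI)
  fix B C assume "B \<in> orbits V N" "C \<in> orbits V N"
  then obtain x y where "x \<in> V" "y \<in> V" "B = orbit N x" "C = orbit N y"
    unfolding orbits_def by blast
  moreover obtain xs where "walk V E xs" "hd xs = x" "last xs = y"
    using assms \<open>x \<in> V\<close> \<open>y \<in> V\<close> unfolding connected_graph_def by blast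
  moreover have "xs \<noteq> []" using \<open>walk V E xs\<close> by (auto simp: walk_def)
  ultimately show "\<exists>Bs. walk (orbits V N) (quot_edge E) Bs \<and> hd Bs = B \<and> last Bs = C"
    using walk_project by (intro exI[of _ "map (orbit N) xs"]) (simp add: hd_map last_map)
qed

lemma geodesic_lift:
  assumes geo: "geodesic (orbits V N) (quot_edge E) i Bs" and "v \<in> hd Bs"
  shows "\<exists>xs. geodesic V E i xs \<and> map (orbit N) xs = Bs"
proof -
  obtain xs where xs: "walk V E xs" "map (orbit N) xs = Bs"
    using walk_lift geo \<open>v \<in> hd Bs\<close> unfolding geodesic_def by blast
  have "geodesic V E i xs" unfolding geodesic_iff_shortest_walk
  proof (intro conjI allI impI)
    show "walk V E xs" "length xs = Suc i"
      using xs geo by (auto simp: geodesic_def)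
    fix ys assume ys: "walk V E ys \<and> hd ys = hd xs \<and> last ys = last xs"
    then have "hd (map (orbit N) ys) = hd Bs" "last (map (orbit N) ys) = last Bs"
      using xs by (auto simp: hd_map last_map walk_def)
    then show "length xs \<le> length ys"
      using walk_project ys xs(2) geo unfolding geodesic_iff_shortest_walk by fastforce
  qed
  with xs(2) show ?thesis by blast
qed

lemma quotient_geodesic_transitive:
  assumes conn: "connected_graph V E" and gt: "geodesic_transitive V E G s"
  shows "geodesic_transitive (orbits V N) (quot_edge E) (quot_action V N G)
           (min s (diam (orbits V N) (quot_edge E)))"
  unfolding geodesic_transitive_def
proof (intro conjI allI impI)
  obtain xs where "geodesic V E s xs" using gt unfolding geodesic_transitive_def by blast
  then have "orbits V N \<noteq> {}"
    unfolding orbits_def geodesic_def walk_def by (cases xs) auto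
  then obtain Bs where "geodesic (orbits V N) (quot_edge E) (diam (orbits V N) (quot_edge E)) Bs"
    using geodesic_diam_exists[OF finite_orbits _ connected_quotient[OF conn]] by blast
  then show "\<exists>Bs. geodesic (orbits V N) (quot_edge E) (min s (diam (orbits V N) (quot_edge E))) Bs"
    using geodesic_take min.cobounded2 by blast
next
  fix i Bs Cs
  assume "i \<le> min s (diam (orbits V N) (quot_edge E))"
    and geo: "geodesic (orbits V N) (quot_edge E) i Bs \<and> geodesic (orbits V N) (quot_edge E) i Cs"
  then have "i \<le> s" by simp
  have "\<exists>v. v \<in> hd Ds" if "geodesic (orbits V N) (quot_edge E) i Ds" for Ds
  proof -
    have "hd Ds \<in> orbits V N" using that by (cases Ds) (auto simp: geodesic_def walk_def)
    then show ?thesis using orbit_self unfolding orbits_def by blast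
  qed
  then obtain xs ys where xs: "geodesic V E i xs" "map (orbit N) xs = Bs"
    and ys: "geodesic V E i ys" "map (orbit N) ys = Cs"
    using geodesic_lift geo by metis
  obtain g where "g \<in> G" "map g xs = ys"
    using gt xs(1) ys(1) \<open>i \<le> s\<close> unfolding geodesic_transitive_def by blast
  define q where "q B = (if B \<in> orbits V N then g ` B else B)" for B
  have q_orbit: "q (orbit N x) = orbit N (g x)" if "x \<in> V" for x
    unfolding q_def using that image_orbit orbit_in_orbits \<open>g \<in> G\<close> by simp
  have "set xs \<subseteq> V" using xs(1) by (simp add: geodesic_def walk_def)
  then have "map q Bs = Cs"
    unfolding xs(2)[symmetric] ys(2)[symmetric] \<open>map g xs = ys\<close>[symmetric] using q_orbit by auto
  moreover have "q \<in> quot_action V N G"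
    unfolding quot_action_def q_def using \<open>g \<in> G\<close> by blast
  ultimately show "\<exists>q\<in>quot_action V N G. map q Bs = Cs" by blast
qed

end

section \<open>Geodesic-transitive graphs\<close>

locale geodesic_transitive_normal = graph_normal_subgroup +
  fixes s :: nat
  assumes connected: "connected_graph V E" and G_geodesic_transitive: "geodesic_transitive V E G s"
    and two_le_s: "2 \<le> s" and intransitive: "\<not> transitive_on V N"
begin

lemma geodesic_transitiveD:
  "i \<le> s \<Longrightarrow> geodesic V E i xs \<Longrightarrow> geodesic V E i ys \<Longrightarrow> \<exists>g\<in>G. map g xs = ys"
  using G_geodesic_transitive unfolding geodesic_transitive_def by blast

lemma vertex_transitive:
  assumes "x \<in> V" "y \<in> V"
  shows "\<exists>g\<in>G. g x = y"
  using geodesic_transitiveD[OF le0 geodesic_singleton[OF assms(1)] geodesic_singleton[OF assms(2)]]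
  by simp

lemma geodesic_edge: "E x y \<Longrightarrow> geodesic V E 1 [x, y]"
  unfolding geodesic_edge_iff using edge_in_V edge_irrefl by auto

lemma arc_transitive:
  assumes "E x y" "E u v"
  shows "\<exists>g\<in>G. g x = u \<and> g y = v"
proof -
  have "1 \<le> s" using two_le_s by simp
  from geodesic_transitiveD[OF this geodesic_edge[OF assms(1)] geodesic_edge[OF assms(2)]]
  show ?thesis by simp
qed

text \<open>An edge inside an orbit would, by arc-transitivity and normality, put every edge inside an
  orbit; by connectedness \<open>N\<close> would then be transitive.\<close>
lemma orbit_independent: "E u v \<Longrightarrow> v \<notin> orbit N u"
proof
  assume "E u v" "v \<in> orbit N u"
  have inside: "y \<in> orbit N x" if xy: "E x y" for x y
  proof -
    obtain g where "g \<in> G" "g u = x" "g v = y" using arc_transitive[OF \<open>E u v\<close> xy] by blast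
    with mem_orbit_image_iff[of g u v] edge_in_V[OF \<open>E u v\<close>] \<open>v \<in> orbit N u\<close> show ?thesis
      by simp
  qed
  have "V \<subseteq> orbit N u"
  proof (rule connected_graph_subset_closed_set[OF connected])
    show "u \<in> V" "u \<in> orbit N u" using edge_in_V[OF \<open>E u v\<close>] orbit_self by auto
    fix y z assume "y \<in> orbit N u" "E y z"
    then show "z \<in> orbit N u" using inside[OF \<open>E y z\<close>] orbit_eq by blast
  qed
  have "transitive_on V N"
    unfolding transitive_on_def
  proof (intro ballI)
    fix a b assume "a \<in> V" "b \<in> V"
    then have "b \<in> orbit N a" using \<open>V \<subseteq> orbit N u\<close> orbit_eq[of a u] by auto
    then show "\<exists>n\<in>N. n a = b" by (auto elim: orbitE)
  qed
  with intransitive show False ..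
qed

sublocale independent_orbits V E G N
  by unfold_locales (rule orbit_independent)

lemma card_orbit_eq:
  assumes "x \<in> V" "y \<in> V"
  shows "card (orbit N x) = card (orbit N y)"
proof -
  obtain g where "g \<in> G" "g x = y" using vertex_transitive[OF assms] by blast
  with card_orbit_image[of g x] assms(1) show ?thesis by simp
qed

context
  fixes u v w
  assumes vu: "E v u" and vw: "E v w" and u_ne_w: "u \<noteq> w" and w_orbit: "w \<in> orbit N u"
    and three_orbits: "3 \<le> card (orbits V N)"
begin

text \<open>Every 2-geodesic is an image of \<open>(u, v, w)\<close>, whose ends lie in one orbit.\<close>
lemma two_geodesic_ends_same_orbit:
  assumes "E x a" "E a y" "x \<noteq> y" "\<not> E x y"
  shows "y \<in> orbit N x"
proof -
  have "u \<in> V" "w \<in> V" using edge_in_V vu vw by auto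
  have "\<not> E u w" using orbit_independent w_orbit by blast
  then have uvw: "geodesic V E 2 [u, v, w]"
    unfolding geodesic_two_iff using vu vw u_ne_w edge_sym edge_in_V by auto
  have xay: "geodesic V E 2 [x, a, y]"
    unfolding geodesic_two_iff using assms edge_in_V by auto
  from geodesic_transitiveD[OF two_le_s uvw xay]
  obtain g where "g \<in> G" "map g [u, v, w] = [x, a, y]" ..
  then have "g \<in> G" "g u = x" "g w = y" by simp_all
  with mem_orbit_image_iff[of g u w] \<open>u \<in> V\<close> \<open>w \<in> V\<close> w_orbit show ?thesis by simp
qed

lemma neighbours_in_distinct_orbits_adjacent:
  assumes "E a y" "E a z" "z \<notin> orbit N y"
  shows "E y z"
proof (rule ccontr)
  assume "\<not> E y z"
  moreover have "y \<noteq> z" using assms(3) orbit_self by blast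
  ultimately have "z \<in> orbit N y"
    using two_geodesic_ends_same_orbit[OF edge_sym[OF assms(1)] assms(2)] by blast
  with assms(3) show False ..
qed

lemma neighbours_in_distinct_orbits_exist: "\<exists>x y z. E x y \<and> E x z \<and> z \<notin> orbit N y"
proof (rule ccontr)
  assume "\<nexists>x y z. E x y \<and> E x z \<and> z \<notin> orbit N y"
  then have "V \<subseteq> orbit N v \<union> orbit N u"
    using subset_two_orbits_if_neighbours_in_one_orbit[OF connected vu] by blast
  have "orbits V N \<subseteq> {orbit N v, orbit N u}"
  proof
    fix B assume "B \<in> orbits V N"
    then obtain x where "x \<in> V" "B = orbit N x" unfolding orbits_def by blast
    with \<open>V \<subseteq> orbit N v \<union> orbit N u\<close> show "B \<in> {orbit N v, orbit N u}"
      by (auto dest: orbit_eq)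
  qed
  then have "card (orbits V N) \<le> card {orbit N v, orbit N u}"
    by (rule card_mono[rotated]) simp
  also have "\<dots> \<le> 2" by (cases "orbit N v = orbit N u") simp_all
  finally show False using three_orbits by simp
qed

lemma neighbour_in_other_orbit:
  assumes "E a y"
  shows "\<exists>z. E a z \<and> z \<notin> orbit N y"
proof -
  obtain x y0 z0 where x: "E x y0" "E x z0" "z0 \<notin> orbit N y0"
    using neighbours_in_distinct_orbits_exist by blast
  obtain g where "g \<in> G" "g x = a"
    using vertex_transitive edge_in_V x(1) assms by blast
  then have "E a (g y0)" "E a (g z0)" "g z0 \<notin> orbit N (g y0)"
    using G_edge x mem_orbit_image_iff[of g y0 z0] edge_in_V by auto
  show ?thesis
  proof (cases "y \<in> orbit N (g y0)")
    case True
    then show ?thesis using \<open>E a (g z0)\<close> \<open>g z0 \<notin> orbit N (g y0)\<close> orbit_eq by blast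
  next
    case False
    then have "g y0 \<notin> orbit N y" using orbit_sym by blast
    with \<open>E a (g y0)\<close> show ?thesis by blast
  qed
qed

lemma within_distance_two:
  assumes "x \<in> V" "y \<in> V"
  shows "y = x \<or> E x y \<or> (\<exists>a. E x a \<and> E a y)"
proof -
  let ?ball = "{y. y = x \<or> E x y \<or> (\<exists>a. E x a \<and> E a y)}"
  have "V \<subseteq> ?ball"
  proof (rule connected_graph_subset_closed_set[OF connected assms(1)])
    fix y y' assume "y \<in> ?ball" "E y y'"
    show "y' \<in> ?ball"
    proof (cases "y = x \<or> E x y \<or> y' = x \<or> E x y' \<or> (\<exists>a. E x a \<and> E a y \<and> E a y')")
      case True
      then show ?thesis using \<open>E y y'\<close> by auto
    next
      case False
      then obtain a where a: "E x a" "E a y" "\<not> E a y'" "y \<noteq> x" "\<not> E x y" "y' \<noteq> x" "\<not> E x y'"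
        using \<open>y \<in> ?ball\<close> by auto
      text \<open>A neighbour \<open>z\<close> of \<open>a\<close> outside the orbit of \<open>x\<close> and \<open>y\<close> is adjacent to \<open>x\<close> and
        \<open>y\<close>, and also to \<open>y'\<close>, which lies in the orbit of \<open>a\<close>.\<close>
      have "y \<in> orbit N x"
        using two_geodesic_ends_same_orbit[OF a(1,2)] a(4,5) by auto
      have "a \<noteq> y'" using a(1,7) by auto
      then have "y' \<in> orbit N a"
        using two_geodesic_ends_same_orbit[OF a(2) \<open>E y y'\<close> _ a(3)] by blast
      obtain z where "E a z" "z \<notin> orbit N x"
        using neighbour_in_other_orbit[OF edge_sym[OF a(1)]] by blast
      then have "E x z"
        using neighbours_in_distinct_orbits_adjacent[OF edge_sym[OF a(1)]] by blast
      have "z \<notin> orbit N y" using \<open>z \<notin> orbit N x\<close> orbit_eq[OF \<open>y \<in> orbit N x\<close>] by simp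
      then have "E y z"
        using neighbours_in_distinct_orbits_adjacent[OF a(2) \<open>E a z\<close>] by blast
      have "z \<notin> orbit N a" using orbit_independent[OF \<open>E a z\<close>] .
      then have "y' \<notin> orbit N z"
        using orbit_eq[OF \<open>y' \<in> orbit N a\<close>] orbit_sym by blast
      then have "E z y'"
        using neighbours_in_distinct_orbits_adjacent[OF \<open>E y z\<close> \<open>E y y'\<close>] by blast
      with \<open>E x z\<close> show ?thesis by blast
    qed
  qed simp
  with assms(2) show ?thesis by blast
qed

lemma adjacent_iff_other_orbit:
  assumes "x \<in> V" "y \<in> V"
  shows "E x y \<longleftrightarrow> y \<notin> orbit N x"
proof
  show "E x y \<Longrightarrow> y \<notin> orbit N x" by (rule orbit_independent)
next
  assume "y \<notin> orbit N x"
  show "E x y"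
  proof (rule ccontr)
    assume "\<not> E x y"
    moreover have "y \<noteq> x" using \<open>y \<notin> orbit N x\<close> orbit_self by blast
    ultimately obtain a where "E x a" "E a y" using within_distance_two[OF assms] by blast
    with \<open>y \<noteq> x\<close> \<open>\<not> E x y\<close> have "y \<in> orbit N x"
      using two_geodesic_ends_same_orbit by blast
    with \<open>y \<notin> orbit N x\<close> show False ..
  qed
qed

lemma two_le_card_orbit: "2 \<le> card (orbit N u)"
proof -
  have "u \<in> V" using edge_in_V vu by blast
  then have "finite (orbit N u)" using finite_subset[OF orbit_subset finite_V] by blast
  moreover have "{u, w} \<subseteq> orbit N u" using w_orbit orbit_self by blast
  ultimately have "card {u, w} \<le> card (orbit N u)" by (rule card_mono)
  with u_ne_w show ?thesis by simp
qed

lemma graph_iso_Kmb_orbits: "graph_iso V E (Kmb_V (card (orbits V N)) (card (orbit N u))) Kmb_E"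
proof -
  have "u \<in> V" using edge_in_V vu by blast
  have "graph_iso V E (Kmb_V (card (orbit N ` V)) (card (orbit N u))) Kmb_E"
  proof (rule graph_iso_Kmb[OF finite_V])
    show "card (orbit N x) = card (orbit N u)" if "x \<in> V" for x
      using card_orbit_eq[OF that \<open>u \<in> V\<close>] .
    show "E x y \<longleftrightarrow> orbit N x \<noteq> orbit N y" if "x \<in> V" "y \<in> V" for x y
      using adjacent_iff_other_orbit[OF that] orbit_eq_iff[of y x] by auto
  qed (auto simp: orbit_self orbit_subset orbit_eq)
  then show ?thesis unfolding orbits_def .
qed

end

end

theorem lemma3p2:
  fixes V :: "'a set" and E :: "'a \<Rightarrow> 'a \<Rightarrow> bool"
    and G N :: "('a \<Rightarrow> 'a) set" and s :: nat
  assumes "simple_graph V E" and "connected_graph V E"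
    and "aut_group V E G"
    and "s \<ge> 2" and "geodesic_transitive V E G s"
    and "normal_subgroup V N G" and "N \<noteq> {id}"
    and "\<not> transitive_on V N"
    and "\<forall>m b. m \<ge> 3 \<and> b \<ge> 2 \<longrightarrow> \<not> graph_iso V E (Kmb_V m b) Kmb_E"
  shows "(card (orbits V N) = 2 \<and> bipartite V E)
       \<or> (card (orbits V N) \<ge> 3 \<and> semiregular V N \<and> is_cover V E N
          \<and> geodesic_transitive (orbits V N) (quot_edge E) (quot_action V N G)
               (min s (diam (orbits V N) (quot_edge E))))"
proof -
  interpret geodesic_transitive_normal V E G N s
    using assms by unfold_locales auto
  have "2 \<le> card (orbits V N)" using card_orbits_ge_2[OF finite_V intransitive] .
  then consider (two) "card (orbits V N) = 2" | (three) "3 \<le> card (orbits V N)" by linarith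
  then show ?thesis
  proof cases
    case two
    then show ?thesis using bipartite_if_two_orbits by (intro disjI1 conjI)
  next
    case three
    have unique: "u = w" if "E v u" "E v w" "w \<in> orbit N u" for v u w
    proof (rule ccontr)
      assume "u \<noteq> w"
      with that three have "graph_iso V E (Kmb_V (card (orbits V N)) (card (orbit N u))) Kmb_E"
        and "2 \<le> card (orbit N u)"
        using graph_iso_Kmb_orbits two_le_card_orbit by blast+
      with assms(9) three show False by auto
    qed
    show ?thesis
    proof (intro disjI2 conjI)
      show "semiregular V N" by (rule semiregular_if_unique_neighbour_in_orbit[OF connected unique])
      show "is_cover V E N" by (rule is_cover_if_unique_neighbour_in_orbit[OF unique])
    qed (use three quotient_geodesic_transitive[OF connected G_geodesic_transitive] in simp_all)
  qed
qed

end
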